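(* Let $f:\mathbb{R}^M\times\Theta\to\mathbb{R}^N$ be a network whose first layer is linear, $f(\mathbf{x};\boldsymbol{\theta})=g(\mathbf{W}\mathbf{x};\bar{\boldsymbol{\theta}})$ with $\boldsymbol{\theta}=(\mathbf{W},\bar{\boldsymbol{\theta}})$, $\mathbf{W}\in\mathbb{R}^{d\times M}$, $g$ differentiable in its first argument and twice differentiable in the parameters. Let $(\mathbf{x}_i,\mathbf{y}_i)_{i=1}^n$ be training data with all $\mathbf{x}_i\ne0$ and let $\boldsymbol{\theta}^*$ be an exact interpolation solution ($f(\mathbf{x}_i;\boldsymbol{\theta}^* )=\mathbf{y}_i$ for all $i$) with first-layer weight $\mathbf{W}$. Then $$\mathrm{MLS}_f=\frac1n\sum_{i=1}^n\|J_f(\mathbf{x}_i)\|_2\le \|\mathbf{W}\|_2\sqrt{\frac1n\sum_{i=1}^n\frac{1}{\|\mathbf{x}_i\|_2^2}}\;S(\boldsymbol{\theta}^* )^{1/2}.$$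
   Context: The loss is $L(\boldsymbol{\theta})=\frac1n\sum_{i=1}^n\frac12\|f(\mathbf{x}_i;\boldsymbol{\theta})-\mathbf{y}_i\|_2^2$ and the sharpness is $S(\boldsymbol{\theta})=\operatorname{Tr}(\nabla^2_{\boldsymbol{\theta}}L(\boldsymbol{\theta}))$. $J_f(\mathbf{x})\in\mathbb{R}^{N\times M}$ is the Jacobian of $\mathbf{x}\mapsto f(\mathbf{x};\boldsymbol{\theta}^* )$; the Maximum Local Sensitivity $\mathrm{MLS}_f$ is the sample mean of its largest singular value over the training inputs. $\|\cdot\|_2$ is the Euclidean norm for vectors and spectral norm for matrices. *)

theory Defs
  imports "HOL-Analysis.Analysis"
begin

definition spectral_norm :: "real^'m^'n \<Rightarrow> real" where
  "spectral_norm A = onorm (\<lambda>v. A *v v)"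

definition net :: "(real^'d \<Rightarrow> 'p \<Rightarrow> real^'n) \<Rightarrow> real^'m \<Rightarrow> (real^'m^'d) \<times> 'p \<Rightarrow> real^'n" where
  "net g x \<theta> = g (fst \<theta> *v x) (snd \<theta>)"

definition loss :: "(real^'d \<Rightarrow> 'p \<Rightarrow> real^'n) \<Rightarrow> (nat \<Rightarrow> real^'m) \<Rightarrow> (nat \<Rightarrow> real^'n) \<Rightarrow> nat
     \<Rightarrow> (real^'m^'d) \<times> 'p \<Rightarrow> real" where
  "loss g x y n \<theta> = (1 / real n) * (\<Sum>i<n. (1/2) * (norm (net g (x i) \<theta> - y i))\<^sup>2)"

definition hessian_trace :: "('a::euclidean_space \<Rightarrow> real) \<Rightarrow> 'a \<Rightarrow> real" where
  "hessian_trace L t = (\<Sum>b\<in>Basis. frechet_derivative (\<lambda>s. frechet_derivative L (at s) b) (at t) b)"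

text \<open>Twice differentiable everywhere: differentiable, and the derivative map s \<mapsto> DF(s) is
  differentiable (equivalently, each s \<mapsto> DF(s) v is differentiable, finite dimensions).\<close>
definition twice_differentiable :: "('a::euclidean_space \<Rightarrow> 'b::real_normed_vector) \<Rightarrow> bool" where
  "twice_differentiable F \<longleftrightarrow> (\<forall>t. F differentiable (at t)) \<and>
     (\<forall>v t. (\<lambda>s. frechet_derivative F (at s) v) differentiable (at t))"

end

theory Submission
  imports Defs
begin

text \<open>
  Write \<open>Dg\<^sub>i\<close> for the derivative of \<open>g(\<cdot>; \<theta>\<^sub>b)\<close> at \<open>W x\<^sub>i\<close>. The Jacobian of
  \<open>u \<mapsto> g(W u; \<theta>\<^sub>b)\<close> at \<open>x\<^sub>i\<close> is \<open>Dg\<^sub>i W\<close>, so its spectral norm is at most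
  \<open>\<parallel>W\<parallel>\<^sub>2 \<parallel>Dg\<^sub>i\<parallel>\<^sub>F\<close>. At an interpolating parameter all residuals vanish, so the trace of the
  Hessian of the loss reduces to the Gauss--Newton term \<open>1/n \<Sum>\<^sub>i \<parallel>\<nabla>\<^sub>\<theta> f(x\<^sub>i)\<parallel>\<^sub>F\<^sup>2\<close>. Keeping only
  the first-layer directions \<open>(E, 0)\<close>, in which the derivative is \<open>Dg\<^sub>i (E x\<^sub>i)\<close>, this is at
  least \<open>1/n \<Sum>\<^sub>i \<parallel>Dg\<^sub>i\<parallel>\<^sub>F\<^sup>2 \<parallel>x\<^sub>i\<parallel>\<^sup>2\<close>. Cauchy--Schwarz, applied to
  \<open>\<parallel>Dg\<^sub>i\<parallel>\<^sub>F = (\<parallel>Dg\<^sub>i\<parallel>\<^sub>F \<parallel>x\<^sub>i\<parallel>) \<cdot> \<parallel>x\<^sub>i\<parallel>\<^sup>-\<^sup>1\<close>, combines the two bounds.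
\<close>

definition frobenius_norm :: "(real^'d \<Rightarrow> 'b::real_normed_vector) \<Rightarrow> real" where
  "frobenius_norm D = L2_set (\<lambda>j. norm (D (axis j 1))) UNIV"

lemma frobenius_norm_nonneg: "0 \<le> frobenius_norm D"
  by (simp add: frobenius_norm_def L2_set_nonneg)

lemma norm_linear_le_frobenius_norm:
  fixes D :: "real^'d \<Rightarrow> 'b::real_normed_vector"
  assumes "linear D"
  shows "norm (D v) \<le> frobenius_norm D * norm v"
proof -
  have "D v = D (\<Sum>j\<in>UNIV. (v$j) *\<^sub>R axis j 1)"
    by (simp add: basis_expansion[of v, unfolded scalar_mult_eq_scaleR])
  also have "\<dots> = (\<Sum>j\<in>UNIV. (v$j) *\<^sub>R D (axis j 1))"
    by (simp add: linear_sum[OF assms] linear_scale[OF assms])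
  finally have "norm (D v) \<le> (\<Sum>j\<in>UNIV. \<bar>v$j\<bar> * \<bar>norm (D (axis j 1))\<bar>)"
    by (simp add: order_trans[OF norm_sum])
  also have "\<dots> \<le> L2_set (\<lambda>j. v$j) UNIV * L2_set (\<lambda>j. norm (D (axis j 1))) UNIV"
    by (rule L2_set_mult_ineq)
  finally show ?thesis
    by (simp add: frobenius_norm_def norm_vec_def L2_set_def mult.commute)
qed

lemma spectral_norm_matrix:
  fixes f :: "real^'m \<Rightarrow> real^'n"
  assumes "linear f"
  shows "spectral_norm (matrix f) = onorm f"
  using assms by (simp add: spectral_norm_def linear_matrix_vector_mul_eq matrix_works)

lemma spectral_norm_nonneg: "0 \<le> spectral_norm A"
  by (simp add: spectral_norm_def onorm_pos_le)

lemma onorm_comp_matrix_le: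
  fixes D :: "real^'d \<Rightarrow> 'b::real_normed_vector" and W :: "real^'m^'d"
  assumes "linear D"
  shows "onorm (\<lambda>h. D (W *v h)) \<le> spectral_norm W * frobenius_norm D"
proof (rule onorm_le)
  fix h
  have "norm (D (W *v h)) \<le> frobenius_norm D * norm (W *v h)"
    by (rule norm_linear_le_frobenius_norm[OF assms])
  also have "\<dots> \<le> frobenius_norm D * (spectral_norm W * norm h)"
    unfolding spectral_norm_def
    by (intro mult_left_mono onorm frobenius_norm_nonneg) simp
  finally show "norm (D (W *v h)) \<le> spectral_norm W * frobenius_norm D * norm h"
    by (simp add: ac_simps)
qed

lemma spectral_norm_jacobian_net_le:
  fixes g :: "real^'d \<Rightarrow> 'p \<Rightarrow> real^'n" and W :: "real^'m^'d"
  assumes "(\<lambda>z. g z q) differentiable (at (W *v u))"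
  shows "spectral_norm (jacobian (\<lambda>v. net g v (W, q)) (at u))
    \<le> spectral_norm W * frobenius_norm (frechet_derivative (\<lambda>z. g z q) (at (W *v u)))"
proof -
  let ?Dg = "frechet_derivative (\<lambda>z. g z q) (at (W *v u))"
  have "((\<lambda>z. g z q) has_derivative ?Dg) (at (W *v u))"
    using assms frechet_derivative_works by blast
  then have chain: "((\<lambda>v. net g v (W, q)) has_derivative (\<lambda>h. ?Dg (W *v h))) (at u)"
    using diff_chain_at[OF bounded_linear_imp_has_derivative[of "(*v) W"]]
    by (simp add: o_def net_def)
  have "spectral_norm (jacobian (\<lambda>v. net g v (W, q)) (at u)) = onorm (\<lambda>h. ?Dg (W *v h))"
    unfolding jacobian_def frechet_derivative_at[OF chain, symmetric]
    by (rule spectral_norm_matrix[OF has_derivative_linear[OF chain]])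
  also have "\<dots> \<le> spectral_norm W * frobenius_norm ?Dg"
    using assms frechet_derivative_works has_derivative_linear onorm_comp_matrix_le by blast
  finally show ?thesis .
qed

lemma sum_Basis_vec:
  fixes \<phi> :: "'a::euclidean_space^'b \<Rightarrow> 'c::comm_monoid_add"
  shows "(\<Sum>b\<in>Basis. \<phi> b) = (\<Sum>j\<in>UNIV. \<Sum>u\<in>Basis. \<phi> (axis j u))"
proof -
  have "(Basis :: ('a^'b) set) = (\<Union>j. axis j ` Basis)"
    by (auto simp: Basis_vec_def)
  then have "(\<Sum>b\<in>Basis. \<phi> b) = (\<Sum>b\<in>(\<Union>j. axis j ` Basis). \<phi> b)"
    by simp
  also have "\<dots> = (\<Sum>j\<in>UNIV. \<Sum>b\<in>axis j ` Basis. \<phi> b)"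
    by (rule sum.UNION_disjoint) (auto simp: axis_eq_axis)
  also have "\<dots> = (\<Sum>j\<in>UNIV. \<Sum>u\<in>Basis. \<phi> (axis j u))"
    by (intro sum.cong refl sum.reindex[unfolded o_def] inj_onI) (auto simp: axis_eq_axis)
  finally show ?thesis .
qed

lemma sum_Basis_prod:
  fixes \<phi> :: "'a::euclidean_space \<times> 'b::euclidean_space \<Rightarrow> 'c::comm_monoid_add"
  shows "(\<Sum>b\<in>Basis. \<phi> b) = (\<Sum>u\<in>Basis. \<phi> (u, 0)) + (\<Sum>v\<in>Basis. \<phi> (0, v))"
proof -
  have "inj_on (\<lambda>u. (u::'a, 0::'b)) Basis" "inj_on (\<lambda>v. (0::'a, v::'b)) Basis"
    by (auto intro!: inj_onI)
  then show ?thesis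
    unfolding Basis_prod_def by (subst sum.union_disjoint) (auto simp: sum.reindex)
qed

lemma matrix_axis_axis_mult:
  fixes x :: "real^'m"
  shows "(axis j (axis k 1) :: real^'m^'d) *v x = (x$k) *\<^sub>R axis j 1"
proof -
  have "(\<Sum>i\<in>UNIV. (if i = k then 1 else 0) * x$i) = x$k"
    by (simp add: if_distrib[of "\<lambda>c. c * _"] cong: if_cong)
  then show ?thesis
    by (simp add: vec_eq_iff matrix_vector_mult_def axis_def)
qed

lemma sum_Basis_matrix_norm_sq:
  fixes D :: "real^'d \<Rightarrow> 'b::real_normed_vector" and u :: "real^'m"
  assumes "linear D"
  shows "(\<Sum>E\<in>(Basis :: (real^'m^'d) set). (norm (D (E *v u)))\<^sup>2) = (frobenius_norm D * norm u)\<^sup>2"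
proof -
  have "(\<Sum>E\<in>(Basis :: (real^'m^'d) set). (norm (D (E *v u)))\<^sup>2)
      = (\<Sum>j\<in>UNIV. \<Sum>k\<in>UNIV. (u$k)\<^sup>2 * (norm (D (axis j 1)))\<^sup>2)"
    by (simp add: sum_Basis_vec matrix_axis_axis_mult linear_scale[OF assms] power_mult_distrib)
  also have "\<dots> = (\<Sum>j\<in>UNIV. (norm (D (axis j 1)))\<^sup>2) * (\<Sum>k\<in>UNIV. (u$k)\<^sup>2)"
    by (simp add: sum_distrib_left sum_distrib_right mult.commute)
  also have "\<dots> = (frobenius_norm D * norm u)\<^sup>2"
    by (simp add: frobenius_norm_def L2_set_def norm_vec_def power_mult_distrib sum_nonneg)
  finally show ?thesis .
qed

lemma frechet_derivative_net_first_layer: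
  fixes g :: "real^'d \<Rightarrow> 'p::euclidean_space \<Rightarrow> real^'n" and W :: "real^'m^'d"
  assumes "(\<lambda>z. g z q) differentiable (at (W *v u))"
    and "net g u differentiable (at (W, q))"
  shows "frechet_derivative (net g u) (at (W, q)) (E, 0)
    = frechet_derivative (\<lambda>z. g z q) (at (W *v u)) (E *v u)"
proof -
  let ?Dg = "frechet_derivative (\<lambda>z. g z q) (at (W *v u))"
  let ?DF = "frechet_derivative (net g u) (at (W, q))"
  have "linear (\<lambda>M::real^'m^'d. M *v u)"
    by (auto intro!: linearI simp: vec_eq_iff matrix_vector_mult_def sum.distrib algebra_simps sum_distrib_left)
  then have "((\<lambda>M::real^'m^'d. M *v u) has_derivative (\<lambda>E. E *v u)) (at W)"
    by (simp add: bounded_linear_imp_has_derivative linear_conv_bounded_linear)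
  moreover have "((\<lambda>z. g z q) has_derivative ?Dg) (at (W *v u))"
    using assms(1) frechet_derivative_works by blast
  ultimately have via_g: "((\<lambda>M. g (M *v u) q) has_derivative (\<lambda>E. ?Dg (E *v u))) (at W)"
    using diff_chain_at by (fastforce simp: o_def)
  have "((\<lambda>M::real^'m^'d. (M, q)) has_derivative (\<lambda>E. (E, 0))) (at W)"
    by (auto intro!: derivative_eq_intros)
  moreover have "(net g u has_derivative ?DF) (at (W, q))"
    using assms(2) frechet_derivative_works by blast
  ultimately have via_net: "((\<lambda>M. g (M *v u) q) has_derivative (\<lambda>E. ?DF (E, 0))) (at W)"
    using diff_chain_at by (fastforce simp: o_def net_def)
  show ?thesis
    using fun_cong[OF has_derivative_unique[OF via_g via_net], of E] by simp
qed

lemma sum_Basis_norm_derivative_net_ge: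
  fixes g :: "real^'d \<Rightarrow> 'p::euclidean_space \<Rightarrow> real^'n" and W :: "real^'m^'d"
  assumes g_diff: "(\<lambda>z. g z q) differentiable (at (W *v u))"
    and net_diff: "net g u differentiable (at (W, q))"
  shows "(frobenius_norm (frechet_derivative (\<lambda>z. g z q) (at (W *v u))) * norm u)\<^sup>2
    \<le> (\<Sum>b\<in>Basis. (norm (frechet_derivative (net g u) (at (W, q)) b))\<^sup>2)"
proof -
  let ?DF = "frechet_derivative (net g u) (at (W, q))"
  have "linear (frechet_derivative (\<lambda>z. g z q) (at (W *v u)))"
    using g_diff frechet_derivative_works has_derivative_linear by blast
  then have "(frobenius_norm (frechet_derivative (\<lambda>z. g z q) (at (W *v u))) * norm u)\<^sup>2
      = (\<Sum>E\<in>Basis. (norm (?DF (E, 0)))\<^sup>2)"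
    by (simp add: sum_Basis_matrix_norm_sq frechet_derivative_net_first_layer[OF g_diff net_diff])
  also have "\<dots> \<le> (\<Sum>b\<in>Basis. (norm (?DF b))\<^sup>2)"
    by (simp add: sum_Basis_prod sum_nonneg)
  finally show ?thesis .
qed

lemma hessian_trace_mean_sq_residual_interpolating:
  fixes F :: "nat \<Rightarrow> 'a::euclidean_space \<Rightarrow> 'b::real_inner"
  assumes twice: "\<And>i. i < n \<Longrightarrow> twice_differentiable (F i)"
    and interp: "\<And>i. i < n \<Longrightarrow> F i t = y i"
  shows "hessian_trace (\<lambda>s. (1 / real n) * (\<Sum>i<n. (1/2) * (norm (F i s - y i))\<^sup>2)) t
    = (1 / real n) * (\<Sum>i<n. \<Sum>b\<in>Basis. (norm (frechet_derivative (F i) (at t) b))\<^sup>2)"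
proof -
  define DF where "DF i s = frechet_derivative (F i) (at s)" for i s
  have dF: "(F i has_derivative DF i s) (at s)" if "i < n" for i s
    using twice[OF that] frechet_derivative_works unfolding twice_differentiable_def DF_def by blast
  have ddF: "((\<lambda>s. DF i s b) has_derivative frechet_derivative (\<lambda>s. DF i s b) (at t)) (at t)"
    if "i < n" for i b
    using twice[OF that] frechet_derivative_works unfolding twice_differentiable_def DF_def by blast
  have gradient: "frechet_derivative (\<lambda>s. (1 / real n) * (\<Sum>i<n. (1/2) * (norm (F i s - y i))\<^sup>2)) (at s)
      = (\<lambda>h. (1 / real n) * (\<Sum>i<n. (F i s - y i) \<bullet> DF i s h))" for s
  proof (rule frechet_derivative_at[symmetric])
    show "((\<lambda>s. (1 / real n) * (\<Sum>i<n. (1/2) * (norm (F i s - y i))\<^sup>2)) has_derivative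
        (\<lambda>h. (1 / real n) * (\<Sum>i<n. (F i s - y i) \<bullet> DF i s h))) (at s)"
      unfolding power2_norm_eq_inner
      by (intro derivative_eq_intros refl) (auto intro!: dF simp: fun_eq_iff inner_commute)
  qed
  have second_derivative: "frechet_derivative (\<lambda>s. (1 / real n) * (\<Sum>i<n. (F i s - y i) \<bullet> DF i s b)) (at t) b
      = (1 / real n) * (\<Sum>i<n. (norm (DF i t b))\<^sup>2)" for b
  proof -
    let ?D2 = "\<lambda>i. frechet_derivative (\<lambda>s. DF i s b) (at t)"
    have "((\<lambda>s. (1 / real n) * (\<Sum>i<n. (F i s - y i) \<bullet> DF i s b)) has_derivative
        (\<lambda>h. (1 / real n) * (\<Sum>i<n. (F i t - y i) \<bullet> ?D2 i h + DF i t h \<bullet> DF i t b))) (at t)"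
      by (intro derivative_eq_intros refl) (auto intro!: dF ddF simp: fun_eq_iff)
    then have "frechet_derivative (\<lambda>s. (1 / real n) * (\<Sum>i<n. (F i s - y i) \<bullet> DF i s b)) (at t) b
        = (1 / real n) * (\<Sum>i<n. (F i t - y i) \<bullet> ?D2 i b + DF i t b \<bullet> DF i t b)"
      by (simp add: frechet_derivative_at[symmetric])
    also have "\<dots> = (1 / real n) * (\<Sum>i<n. (norm (DF i t b))\<^sup>2)"
      \<comment> \<open>the second derivatives of \<open>F i\<close> only enter multiplied by the vanishing residual\<close>
      by (simp add: interp power2_norm_eq_inner)
    finally show ?thesis .
  qed
  show ?thesis
    unfolding hessian_trace_def gradient second_derivative
    by (simp add: DF_def sum.swap[of _ Basis] sum_distrib_left)
qed

lemma mean_le_sqrt_mean_sq_mult_sqrt_mean_inverse_sq: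
  fixes a r :: "nat \<Rightarrow> real"
  assumes "\<And>i. i < n \<Longrightarrow> r i \<noteq> 0"
  shows "(1 / real n) * (\<Sum>i<n. a i)
    \<le> sqrt ((1 / real n) * (\<Sum>i<n. (a i * r i)\<^sup>2)) * sqrt ((1 / real n) * (\<Sum>i<n. 1 / (r i)\<^sup>2))"
proof -
  have "(\<Sum>i<n. a i) \<le> (\<Sum>i<n. \<bar>a i * r i\<bar> * \<bar>1 / r i\<bar>)"
    by (intro sum_mono) (simp add: assms abs_mult)
  also have "\<dots> \<le> L2_set (\<lambda>i. a i * r i) {..<n} * L2_set (\<lambda>i. 1 / r i) {..<n}"
    by (rule L2_set_mult_ineq)
  also have "\<dots> = sqrt (\<Sum>i<n. (a i * r i)\<^sup>2) * sqrt (\<Sum>i<n. 1 / (r i)\<^sup>2)"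
    by (simp add: L2_set_def power_one_over)
  finally have "(1 / real n) * (\<Sum>i<n. a i)
      \<le> (1 / real n) * (sqrt (\<Sum>i<n. (a i * r i)\<^sup>2) * sqrt (\<Sum>i<n. 1 / (r i)\<^sup>2))"
    by (rule mult_left_mono) simp
  also have "\<dots> = (sqrt (1 / real n) * sqrt (1 / real n))
      * (sqrt (\<Sum>i<n. (a i * r i)\<^sup>2) * sqrt (\<Sum>i<n. 1 / (r i)\<^sup>2))"
    by simp
  finally show ?thesis
    by (simp only: real_sqrt_mult mult_ac)
qed

theorem proposition3:
  fixes g :: "real^'d \<Rightarrow> 'p::euclidean_space \<Rightarrow> real^'n"
    and W :: "real^'m^'d" and tb :: 'p
    and x :: "nat \<Rightarrow> real^'m" and y :: "nat \<Rightarrow> real^'n" and n :: nat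
  assumes g_diff: "\<And>z q. (\<lambda>u. g u q) differentiable (at z)"
    and g_twice: "\<And>u::real^'m. twice_differentiable (net g u)"
    and x_nz: "\<And>i. i < n \<Longrightarrow> x i \<noteq> 0"
    and interp: "\<And>i. i < n \<Longrightarrow> net g (x i) (W, tb) = y i"
  shows "(1 / real n) * (\<Sum>i<n. spectral_norm (jacobian (\<lambda>u. net g u (W, tb)) (at (x i))))
     \<le> spectral_norm W * sqrt ((1 / real n) * (\<Sum>i<n. 1 / (norm (x i))\<^sup>2))
        * sqrt (hessian_trace (loss g x y n) (W, tb))"
proof -
  let ?Fr = "\<lambda>i. frobenius_norm (frechet_derivative (\<lambda>z. g z tb) (at (W *v x i)))"
  let ?H = "hessian_trace (loss g x y n) (W, tb)"
  let ?B = "(1 / real n) * (\<Sum>i<n. 1 / (norm (x i))\<^sup>2)"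
  have net_diff: "net g u differentiable (at \<theta>)" for u :: "real^'m" and \<theta>
    using g_twice unfolding twice_differentiable_def by blast
  have "(1 / real n) * (\<Sum>i<n. (?Fr i * norm (x i))\<^sup>2)
      \<le> (1 / real n) *
        (\<Sum>i<n. \<Sum>b\<in>Basis. (norm (frechet_derivative (net g (x i)) (at (W, tb)) b))\<^sup>2)"
    by (intro mult_left_mono sum_mono sum_Basis_norm_derivative_net_ge g_diff net_diff) simp
  also have "\<dots> = ?H"
    unfolding loss_def[abs_def]
    using hessian_trace_mean_sq_residual_interpolating[of n "\<lambda>i. net g (x i)", OF g_twice interp]
    by simp
  finally have H_ge: "(1 / real n) * (\<Sum>i<n. (?Fr i * norm (x i))\<^sup>2) \<le> ?H" .
  have "(1 / real n) * (\<Sum>i<n. spectral_norm (jacobian (\<lambda>u. net g u (W, tb)) (at (x i))))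
      \<le> (1 / real n) * (\<Sum>i<n. spectral_norm W * ?Fr i)"
    by (intro mult_left_mono sum_mono spectral_norm_jacobian_net_le g_diff) simp
  also have "\<dots> = spectral_norm W * ((1 / real n) * (\<Sum>i<n. ?Fr i))"
    by (simp add: sum_distrib_left)
  also have "\<dots> \<le> spectral_norm W * (sqrt ((1 / real n) * (\<Sum>i<n. (?Fr i * norm (x i))\<^sup>2)) * sqrt ?B)"
    by (intro mult_left_mono mean_le_sqrt_mean_sq_mult_sqrt_mean_inverse_sq spectral_norm_nonneg)
      (simp add: x_nz)
  also have "\<dots> \<le> spectral_norm W * (sqrt ?H * sqrt ?B)"
    by (intro mult_left_mono mult_right_mono real_sqrt_le_mono H_ge spectral_norm_nonneg)
      (simp_all add: sum_nonneg)
  finally show ?thesis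
    by (simp add: ac_simps)
qed

end
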